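(* Let $m\in\mathbb{N}$, $a,b>0$, let $f=(1,f_1,\ldots,f_{p-1})^T$ be a vector of known regression functions on $\mathbb{R}^k$, let $\beta\in\mathbb{R}^p$ be the unknown parameter, and let $x_1,\ldots,x_m\in\mathbb{R}^k$. Let $\Theta\sim\gamma(a,b)$ (density $\frac{b^a}{\Gamma(a)}\theta^{a-1}e^{-b\theta}$, $\theta>0$) and assume that conditionally on $\Theta=\theta$ the random variables $Y_1,\ldots,Y_m$ are independent with $Y_j$ Poisson distributed with mean $\theta\exp(f(x_j)^T\beta)$. Then the Fisher information matrix of $Y=(Y_1,\ldots,Y_m)$ for $\beta$ is $$I(\beta)=\frac{a}{b}\left(I_{Po}(\beta)-\frac{I_{Po}(\beta)e_1e_1^TI_{Po}(\beta)}{e_1^TI_{Po}(\beta)e_1+b}\right),$$ where $I_{Po}(\beta)=\sum_{j=1}^m\exp\bigl(f(x_j)^T\beta\bigr)f(x_j)f(x_j)^T$ and $e_1$ is the first standard unit vector of $\mathbb{R}^p$.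
   Context: The shape parameter $a$ and rate parameter $b$ are known; only $\beta$ is the parameter of interest. $I_{Po}(\beta)$ is the Fisher information matrix of the Poisson model without random effect. *)

theory Defs
  imports "HOL-Analysis.Analysis"
begin

text \<open>Parameter vectors in R^p are represented as functions nat => real,
  only the indices 0..p-1 being relevant. Index 0 corresponds to the intercept.\<close>

definition poisson_dens :: "real \<Rightarrow> nat \<Rightarrow> real" where
  "poisson_dens \<mu> k = exp (- \<mu>) * \<mu> ^ k / fact k"

definition gamma_dens :: "real \<Rightarrow> real \<Rightarrow> real \<Rightarrow> real" where
  "gamma_dens a b \<theta> =
     (if 0 < \<theta> then b powr a / Gamma a * \<theta> powr (a - 1) * exp (- b * \<theta>) else 0)"

definition lin_pred :: "nat \<Rightarrow> ('x \<Rightarrow> nat \<Rightarrow> real) \<Rightarrow> 'x \<Rightarrow> (nat \<Rightarrow> real) \<Rightarrow> real" where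
  "lin_pred p f z \<beta> = (\<Sum>i<p. f z i * \<beta> i)"

definition obs_space :: "nat \<Rightarrow> (nat \<Rightarrow> nat) set" where
  "obs_space m = {y. \<forall>j\<ge>m. y j = 0}"

definition marg_pmf :: "nat \<Rightarrow> nat \<Rightarrow> ('x \<Rightarrow> nat \<Rightarrow> real) \<Rightarrow> (nat \<Rightarrow> 'x) \<Rightarrow> real \<Rightarrow> real
    \<Rightarrow> (nat \<Rightarrow> real) \<Rightarrow> (nat \<Rightarrow> nat) \<Rightarrow> real" where
  "marg_pmf p m f x a b \<beta> y =
     (LINT \<theta>|lborel. gamma_dens a b \<theta> *
        (\<Prod>j<m. poisson_dens (\<theta> * exp (lin_pred p f (x j) \<beta>)) (y j)))"

definition score :: "nat \<Rightarrow> nat \<Rightarrow> ('x \<Rightarrow> nat \<Rightarrow> real) \<Rightarrow> (nat \<Rightarrow> 'x) \<Rightarrow> real \<Rightarrow> real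
    \<Rightarrow> (nat \<Rightarrow> real) \<Rightarrow> (nat \<Rightarrow> nat) \<Rightarrow> nat \<Rightarrow> real" where
  "score p m f x a b \<beta> y r = deriv (\<lambda>t. ln (marg_pmf p m f x a b (\<beta>(r := t)) y)) (\<beta> r)"

definition I_Po :: "nat \<Rightarrow> nat \<Rightarrow> ('x \<Rightarrow> nat \<Rightarrow> real) \<Rightarrow> (nat \<Rightarrow> 'x) \<Rightarrow> (nat \<Rightarrow> real)
    \<Rightarrow> nat \<Rightarrow> nat \<Rightarrow> real" where
  "I_Po p m f x \<beta> r s = (\<Sum>j<m. exp (lin_pred p f (x j) \<beta>) * f (x j) r * f (x j) s)"

definition e1 :: "nat \<Rightarrow> real" where
  "e1 i = (if i = 0 then 1 else 0)"

end

theory Submission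
  imports Defs
begin

text \<open>Integrating out the gamma variable turns the model into a negative multinomial law with an
  explicit pmf, so the score is explicit: with \<open>\<mu>\<^sub>j = exp (f(x\<^sub>j)\<^sup>T\<beta>)\<close>,
  \<open>c\<^sub>r = \<Sum>\<^sub>j \<mu>\<^sub>j f\<^sub>r(x\<^sub>j)\<close> and \<open>D = b + \<Sum>\<^sub>j \<mu>\<^sub>j\<close>, the score for \<open>\<beta>\<^sub>r\<close> is
  \<open>\<Sum>\<^sub>j (f\<^sub>r(x\<^sub>j) - c\<^sub>r/D) (Y\<^sub>j - a/b \<mu>\<^sub>j)\<close>, a linear form in the centred counts.
  Averaging the Poisson factorial moments \<open>(\<theta> \<mu>\<^sub>j)\<^sup>k\<close> over the gamma law gives the factorial
  moments of \<open>Y\<close>, hence \<open>Cov(Y\<^sub>j, Y\<^sub>l) = a/b \<mu>\<^sub>j [j = l] + a/b\<^sup>2 \<mu>\<^sub>j \<mu>\<^sub>l\<close>.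
  Contracting this covariance with the coefficient vectors of the two scores yields
  \<open>a/b (I\<^sub>P\<^sub>o - c c\<^sup>T/D)\<close>, and since \<open>f\<^sub>0 = 1\<close>, \<open>c = I\<^sub>P\<^sub>o e\<^sub>1\<close> and \<open>D = e\<^sub>1\<^sup>T I\<^sub>P\<^sub>o e\<^sub>1 + b\<close>.\<close>

section \<open>Gamma and Poisson densities\<close>

lemma nn_integral_powr_exp_Gamma:
  fixes s c :: real
  assumes s: "0 < s" and c: "0 < c"
  shows "(\<integral>\<^sup>+t. ennreal (indicator {0<..} t * t powr (s - 1) * exp (- c * t)) \<partial>lborel)
         = ennreal (Gamma s / c powr s)"
proof -
  have "(\<integral>\<^sup>+t. ennreal (indicator {0<..} t * t powr (s - 1) * exp (- c * t)) \<partial>lborel)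
      = (\<integral>\<^sup>+t. ennreal (c powr (1 - s)) * ennreal (indicator {0..} (c * t) * (c * t) powr (s - 1) / exp (c * t)) \<partial>lborel)"
  proof (intro nn_integral_cong)
    fix t :: real
    show "ennreal (indicator {0<..} t * t powr (s - 1) * exp (- c * t)) =
          ennreal (c powr (1 - s)) * ennreal (indicator {0..} (c * t) * (c * t) powr (s - 1) / exp (c * t))"
    proof (cases "0 < t")
      case True
      have "c powr (1 - s) * (c * t) powr (s - 1) = t powr (s - 1)"
        using True c by (simp add: powr_mult powr_diff field_simps)
      then show ?thesis
        using True c by (simp add: ennreal_mult'[symmetric] exp_minus field_simps)
    qed (use c in \<open>auto simp: indicator_def zero_le_mult_iff\<close>)
  qed
  also have "\<dots> = ennreal (c powr (1 - s)) *
      (\<integral>\<^sup>+t. ennreal (indicator {0..} t * t powr (s - 1) / exp t) \<partial>distr lborel borel ((*) c))"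
    by (subst nn_integral_cmult) (auto simp: nn_integral_distr)
  also have "\<dots> = ennreal (c powr (1 - s)) * (ennreal (inverse c) * ennreal (Gamma s))"
    using c s by (simp add: lborel_distr_mult nn_integral_density nn_integral_cmult
        Gamma_conv_nn_integral_real)
  also have "\<dots> = ennreal (Gamma s / c powr s)"
    using c s Gamma_real_pos[OF s] by (simp add: ennreal_mult[symmetric] powr_diff field_simps)
  finally show ?thesis .
qed

lemma gamma_dens_nonneg: "0 < a \<Longrightarrow> 0 \<le> gamma_dens a b \<theta>"
  by (simp add: gamma_dens_def Gamma_real_pos)

lemma gamma_dens_measurable [measurable]: "gamma_dens a b \<in> borel_measurable borel"
  unfolding gamma_dens_def[abs_def] by measurable

lemma nn_integral_gamma_dens_power:
  assumes a: "0 < a" and b: "0 < b"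
  shows "(\<integral>\<^sup>+\<theta>. ennreal (gamma_dens a b \<theta> * \<theta> ^ k) \<partial>lborel) = ennreal (pochhammer a k / b ^ k)"
proof -
  have "(\<integral>\<^sup>+\<theta>. ennreal (gamma_dens a b \<theta> * \<theta> ^ k) \<partial>lborel)
      = (\<integral>\<^sup>+\<theta>. ennreal (b powr a / Gamma a) *
           ennreal (indicator {0<..} \<theta> * \<theta> powr (a + real k - 1) * exp (- b * \<theta>)) \<partial>lborel)"
  proof (intro nn_integral_cong)
    fix \<theta> :: real
    show "ennreal (gamma_dens a b \<theta> * \<theta> ^ k) = ennreal (b powr a / Gamma a) *
           ennreal (indicator {0<..} \<theta> * \<theta> powr (a + real k - 1) * exp (- b * \<theta>))"
    proof (cases "0 < \<theta>")
      case True
      then have "\<theta> powr (a - 1) * \<theta> ^ k = \<theta> powr (a + real k - 1)"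
        by (simp add: powr_realpow[symmetric] powr_add[symmetric] algebra_simps)
      then show ?thesis
        using True a by (simp add: gamma_dens_def ennreal_mult'[symmetric] Gamma_real_pos)
    qed (simp add: gamma_dens_def)
  qed
  also have "\<dots> = ennreal (b powr a / Gamma a) * ennreal (Gamma (a + real k) / b powr (a + real k))"
    using a b nn_integral_powr_exp_Gamma[of "a + real k" b] by (simp add: nn_integral_cmult)
  also have "\<dots> = ennreal (pochhammer a k / b ^ k)"
    using a b Gamma_real_pos[OF a] pochhammer_Gamma[of a k]
    by (simp add: ennreal_mult'[symmetric] powr_add powr_realpow field_simps nonpos_Ints_def)
  finally show ?thesis .
qed

lemma poisson_dens_nonneg: "0 \<le> l \<Longrightarrow> 0 \<le> poisson_dens l n"
  by (simp add: poisson_dens_def)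

lemma poisson_dens_measurable [measurable]:
  assumes [measurable]: "f \<in> borel_measurable M"
  shows "(\<lambda>x. poisson_dens (f x) n) \<in> borel_measurable M"
  unfolding poisson_dens_def by measurable

lemma poisson_dens_sums: "(\<lambda>n. poisson_dens l n) sums 1"
proof -
  have "(\<lambda>n. exp (- l) * (l ^ n /\<^sub>R fact n)) sums (exp (- l) * exp l)"
    by (intro sums_mult exp_converges)
  then show ?thesis by (simp add: poisson_dens_def exp_minus field_simps)
qed

lemma poisson_dens_mean_sums: "(\<lambda>n. poisson_dens l n * real n) sums l"
proof -
  have "poisson_dens l (Suc n) * real (Suc n) = l * poisson_dens l n" for n
    by (simp add: poisson_dens_def field_simps del: of_nat_Suc)
  then have "(\<lambda>n. poisson_dens l (Suc n) * real (Suc n)) sums l"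
    using sums_mult[OF poisson_dens_sums, of l] by simp
  then show ?thesis by (subst (asm) sums_Suc_iff) simp
qed

lemma poisson_dens_factorial_moment_sums: "(\<lambda>n. poisson_dens l n * (real n * (real n - 1))) sums l ^ 2"
proof -
  have "poisson_dens l (n + 2) * (real (n + 2) * (real (n + 2) - 1)) = l ^ 2 * poisson_dens l n" for n
  proof -
    define q where "q = real (n + 2) * (real (n + 2) - 1)"
    have "q \<noteq> 0"
      by (simp add: q_def)
    then show ?thesis
      by (simp add: poisson_dens_def power_add power2_eq_square q_def[symmetric])
  qed
  then have "(\<lambda>n. poisson_dens l (n + 2) * (real (n + 2) * (real (n + 2) - 1))) sums l ^ 2"
    using sums_mult[OF poisson_dens_sums, of "l ^ 2"] by simp
  then show ?thesis by (subst (asm) sums_iff_shift) (simp add: numeral_2_eq_2)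
qed

section \<open>Count vectors and sums over them\<close>

lemma countable_obs_space: "countable (obs_space m)"
proof -
  have "obs_space m \<subseteq> (\<lambda>l j. if j < length l then l ! j else 0) ` (UNIV :: nat list set)"
  proof
    fix y assume "y \<in> obs_space m"
    then have "y = (\<lambda>j. if j < length (map y [0..<m]) then map y [0..<m] ! j else 0)"
      by (auto simp: obs_space_def fun_eq_iff)
    then show "y \<in> (\<lambda>l j. if j < length l then l ! j else 0) ` UNIV" by blast
  qed
  then show ?thesis by (rule countable_subset) simp
qed

lemma bij_betw_obs_space_Suc:
  "bij_betw (\<lambda>(y, n). y(m := n)) (obs_space m \<times> UNIV) (obs_space (Suc m))"
proof (rule bij_betw_byWitness[where f' = "\<lambda>y. (y(m := 0), y m)"])
  show "\<forall>z\<in>obs_space m \<times> UNIV. (\<lambda>y. (y(m := 0), y m)) ((\<lambda>(y, n). y(m := n)) z) = z"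
    by (auto simp: obs_space_def fun_eq_iff)
  show "\<forall>y\<in>obs_space (Suc m). (\<lambda>(y, n). y(m := n)) ((\<lambda>y. (y(m := 0), y m)) y) = y"
    by (auto simp: obs_space_def fun_eq_iff)
  show "(\<lambda>(y, n). y(m := n)) ` (obs_space m \<times> UNIV) \<subseteq> obs_space (Suc m)"
    by (auto simp: obs_space_def)
  show "(\<lambda>y. (y(m := 0), y m)) ` obs_space (Suc m) \<subseteq> obs_space m \<times> UNIV"
    by (auto simp: obs_space_def)
qed

lemma nn_integral_obs_space_prod:
  fixes g :: "nat \<Rightarrow> nat \<Rightarrow> ennreal"
  shows "(\<integral>\<^sup>+y. (\<Prod>j<m. g j (y j)) \<partial>count_space (obs_space m))
         = (\<Prod>j<m. \<integral>\<^sup>+n. g j n \<partial>count_space UNIV)"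
proof (induction m)
  case 0
  have "obs_space 0 = {\<lambda>_. 0}" by (auto simp: obs_space_def)
  then show ?case by (simp add: nn_integral_count_space_finite)
next
  case (Suc m)
  have product: "count_space (obs_space m \<times> UNIV) = count_space (obs_space m) \<Otimes>\<^sub>M count_space (UNIV :: nat set)"
    by (simp add: pair_measure_countable countable_obs_space)
  have "(\<integral>\<^sup>+y. (\<Prod>j<Suc m. g j (y j)) \<partial>count_space (obs_space (Suc m)))
     = (\<integral>\<^sup>+z. (\<Prod>j<Suc m. g j (((\<lambda>(y, n). y(m := n)) z) j)) \<partial>count_space (obs_space m \<times> UNIV))"
    by (rule nn_integral_bij_count_space[OF bij_betw_obs_space_Suc, symmetric])
  also have "\<dots> = (\<integral>\<^sup>+z. (\<Prod>j<m. g j (fst z j)) * g m (snd z) \<partial>count_space (obs_space m \<times> UNIV))"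
    by (intro nn_integral_cong) (auto simp: split_beta intro!: prod.cong)
  also have "\<dots> = (\<integral>\<^sup>+y. \<integral>\<^sup>+n. (\<Prod>j<m. g j (y j)) * g m n \<partial>count_space UNIV \<partial>count_space (obs_space m))"
    unfolding product
    using sigma_finite_measure.nn_integral_fst[OF sigma_finite_measure_count_space_countable[of UNIV],
        of "\<lambda>z. (\<Prod>j<m. g j (fst z j)) * g m (snd z)" "count_space (obs_space m)"]
    by (simp add: product[symmetric])
  also have "\<dots> = (\<Prod>j<Suc m. \<integral>\<^sup>+n. g j n \<partial>count_space UNIV)"
    by (simp add: nn_integral_cmult nn_integral_multc Suc)
  finally show ?case .
qed

lemma nn_integral_obs_space_prod_sums:
  fixes g :: "nat \<Rightarrow> nat \<Rightarrow> real"
  assumes nonneg: "\<And>j n. j < m \<Longrightarrow> 0 \<le> g j n" and sums: "\<And>j. j < m \<Longrightarrow> g j sums v j"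
  shows "(\<integral>\<^sup>+y. ennreal (\<Prod>j<m. g j (y j)) \<partial>count_space (obs_space m)) = ennreal (\<Prod>j<m. v j)"
proof -
  have v_nonneg: "0 \<le> v j" if "j < m" for j
    using sums_le[OF _ sums_zero sums[OF that]] nonneg[OF that] by simp
  have "(\<integral>\<^sup>+y. ennreal (\<Prod>j<m. g j (y j)) \<partial>count_space (obs_space m))
      = (\<integral>\<^sup>+y. (\<Prod>j<m. ennreal (g j (y j))) \<partial>count_space (obs_space m))"
    using nonneg by (intro nn_integral_cong prod_ennreal[symmetric]) simp
  also have "\<dots> = (\<Prod>j<m. \<integral>\<^sup>+n. ennreal (g j n) \<partial>count_space UNIV)"
    by (rule nn_integral_obs_space_prod)
  also have "\<dots> = (\<Prod>j<m. ennreal (v j))"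
    using nonneg sums by (intro prod.cong refl) (simp add: nn_integral_count_space_nat suminf_ennreal_eq)
  also have "\<dots> = ennreal (\<Prod>j<m. v j)"
    using v_nonneg by (intro prod_ennreal) simp
  finally show ?thesis .
qed

lemma has_sum_of_nn_integral:
  fixes F :: "'a \<Rightarrow> real"
  assumes "\<And>y. y \<in> A \<Longrightarrow> 0 \<le> F y" and "(\<integral>\<^sup>+y. ennreal (F y) \<partial>count_space A) = ennreal R"
    and "0 \<le> R"
  shows "(F has_sum R) A"
proof -
  have "integrable (count_space A) F \<and> integral\<^sup>L (count_space A) F = R"
    using assms by (subst nn_integral_eq_integrable[symmetric]) (auto simp: AE_count_space)
  then have "Infinite_Set_Sum.abs_summable_on F A" and "infsetsum F A = R"
    by (auto simp: abs_summable_on_def infsetsum_def)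
  then show ?thesis
    by (metis abs_summable_equivalent abs_summable_summable has_sum_infsum infsetsum_infsum)
qed

lemma has_sum_sum:
  fixes f :: "'i \<Rightarrow> 'a \<Rightarrow> real"
  assumes "finite I" and "\<And>i. i \<in> I \<Longrightarrow> (f i has_sum v i) A"
  shows "((\<lambda>y. \<Sum>i\<in>I. f i y) has_sum (\<Sum>i\<in>I. v i)) A"
  using assms by (induction I rule: finite_induct) (auto intro: has_sum_add)

lemma has_sum_diff:
  fixes f g :: "'a \<Rightarrow> real"
  assumes "(f has_sum u) A" and "(g has_sum v) A"
  shows "((\<lambda>y. f y - g y) has_sum (u - v)) A"
  using has_sum_add[OF assms(1) has_sum_cmult_right[OF assms(2), of "-1"]] by simp

section \<open>The gamma mixture of Poisson counts\<close>

definition gamma_poisson_pmf :: "real \<Rightarrow> real \<Rightarrow> (nat \<Rightarrow> real) \<Rightarrow> nat \<Rightarrow> (nat \<Rightarrow> nat) \<Rightarrow> real" where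
  "gamma_poisson_pmf a b \<mu> m y =
     (LINT \<theta>|lborel. gamma_dens a b \<theta> * (\<Prod>j<m. poisson_dens (\<theta> * \<mu> j) (y j)))"

(* In the usual parametrisation this is Gamma (a + N) / (Gamma a * prod_j y_j!) * p_0^a * prod_j p_j^(y_j)
   with N = sum_j y_j, D = b + sum_j mu_j, p_0 = b / D and p_j = mu_j / D. *)
definition neg_multinomial_pmf :: "real \<Rightarrow> real \<Rightarrow> (nat \<Rightarrow> real) \<Rightarrow> nat \<Rightarrow> (nat \<Rightarrow> nat) \<Rightarrow> real" where
  "neg_multinomial_pmf a b \<mu> m y =
     b powr a / Gamma a * (\<Prod>j<m. \<mu> j ^ y j / fact (y j)) *
     (Gamma (a + real (\<Sum>j<m. y j)) / (b + (\<Sum>j<m. \<mu> j)) powr (a + real (\<Sum>j<m. y j)))"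

lemma gamma_poisson_integrand_eq:
  fixes m :: nat and y :: "nat \<Rightarrow> nat"
  shows "gamma_dens a b \<theta> * (\<Prod>j<m. poisson_dens (\<theta> * \<mu> j) (y j)) =
   b powr a / Gamma a * (\<Prod>j<m. \<mu> j ^ y j / fact (y j)) *
   (indicator {0<..} \<theta> * \<theta> powr (a + real (\<Sum>j<m. y j) - 1) * exp (- (b + (\<Sum>j<m. \<mu> j)) * \<theta>))"
proof (cases "0 < \<theta>")
  case True
  define N where "N = (\<Sum>j<m. y j)"
  define M where "M = (\<Sum>j<m. \<mu> j)"
  define Q where "Q = (\<Prod>j<m. \<mu> j ^ y j / fact (y j))"
  have "exp (- M * \<theta>) = exp (\<Sum>j<m. - (\<theta> * \<mu> j))"
    by (simp add: M_def sum_distrib_left sum_negf mult.commute)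
  also have "\<dots> = (\<Prod>j<m. exp (- (\<theta> * \<mu> j)))"
    by (simp add: exp_sum)
  finally have "(\<Prod>j<m. poisson_dens (\<theta> * \<mu> j) (y j)) = exp (- M * \<theta>) * \<theta> ^ N * Q"
    by (simp add: poisson_dens_def N_def Q_def prod.distrib power_mult_distrib power_sum prod_dividef)
  then have "gamma_dens a b \<theta> * (\<Prod>j<m. poisson_dens (\<theta> * \<mu> j) (y j))
      = b powr a / Gamma a * Q * ((\<theta> powr (a - 1) * \<theta> ^ N) * (exp (- b * \<theta>) * exp (- M * \<theta>)))"
    using True by (simp only: gamma_dens_def if_True mult_ac)
  also have "\<theta> powr (a - 1) * \<theta> ^ N = \<theta> powr (a + real N - 1)"
    using True by (simp add: powr_realpow[symmetric] powr_add[symmetric] algebra_simps)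
  also have "exp (- b * \<theta>) * exp (- M * \<theta>) = exp (- (b + M) * \<theta>)"
    by (simp add: exp_add[symmetric] algebra_simps)
  finally show ?thesis
    using True by (simp add: M_def N_def Q_def)
qed (simp add: gamma_dens_def)

lemma nn_integral_gamma_poisson_integrand:
  fixes m :: nat and y :: "nat \<Rightarrow> nat"
  assumes a: "0 < a" and b: "0 < b" and \<mu>: "\<And>j. j < m \<Longrightarrow> 0 \<le> \<mu> j"
  shows "(\<integral>\<^sup>+\<theta>. ennreal (gamma_dens a b \<theta> * (\<Prod>j<m. poisson_dens (\<theta> * \<mu> j) (y j))) \<partial>lborel)
         = ennreal (neg_multinomial_pmf a b \<mu> m y)"
proof -
  define N where "N = real (\<Sum>j<m. y j)"
  define M where "M = (\<Sum>j<m. \<mu> j)"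
  define C where "C = b powr a / Gamma a * (\<Prod>j<m. \<mu> j ^ y j / fact (y j))"
  have "0 \<le> M" and "0 \<le> N"
    using \<mu> by (auto simp: M_def N_def intro: sum_nonneg)
  have "0 \<le> C"
    unfolding C_def using a \<mu> by (intro mult_nonneg_nonneg divide_nonneg_pos prod_nonneg) auto
  have "gamma_dens a b \<theta> * (\<Prod>j<m. poisson_dens (\<theta> * \<mu> j) (y j)) =
        C * (indicator {0<..} \<theta> * \<theta> powr (a + N - 1) * exp (- (b + M) * \<theta>))" for \<theta>
    unfolding C_def M_def N_def by (rule gamma_poisson_integrand_eq)
  then have "(\<integral>\<^sup>+\<theta>. ennreal (gamma_dens a b \<theta> * (\<Prod>j<m. poisson_dens (\<theta> * \<mu> j) (y j))) \<partial>lborel)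
      = ennreal C * (\<integral>\<^sup>+\<theta>. ennreal (indicator {0<..} \<theta> * \<theta> powr (a + N - 1) * exp (- (b + M) * \<theta>)) \<partial>lborel)"
    using \<open>0 \<le> C\<close> by (simp add: ennreal_mult' nn_integral_cmult)
  also have "\<dots> = ennreal (C * (Gamma (a + N) / (b + M) powr (a + N)))"
    using a b \<open>0 \<le> M\<close> \<open>0 \<le> N\<close> \<open>0 \<le> C\<close>
    by (subst nn_integral_powr_exp_Gamma) (simp_all add: ennreal_mult'[symmetric])
  finally show ?thesis
    by (simp add: neg_multinomial_pmf_def C_def M_def N_def)
qed

lemma neg_multinomial_pmf_pos:
  fixes m :: nat
  assumes "0 < a" and "0 < b" and "\<And>j. j < m \<Longrightarrow> 0 < \<mu> j"
  shows "0 < neg_multinomial_pmf a b \<mu> m y"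
proof -
  have "0 \<le> (\<Sum>j<m. \<mu> j)" and "0 \<le> real (\<Sum>j<m. y j)"
    using assms by (auto intro: sum_nonneg less_imp_le)
  then show ?thesis
    unfolding neg_multinomial_pmf_def using assms
    by (intro mult_pos_pos divide_pos_pos prod_pos Gamma_real_pos) auto
qed

lemma gamma_poisson_pmf_eq_neg_multinomial:
  fixes m :: nat
  assumes "0 < a" and "0 < b" and "\<And>j. j < m \<Longrightarrow> 0 < \<mu> j"
  shows "gamma_poisson_pmf a b \<mu> m y = neg_multinomial_pmf a b \<mu> m y"
proof -
  have "0 \<le> gamma_dens a b \<theta> * (\<Prod>j<m. poisson_dens (\<theta> * \<mu> j) (y j))" for \<theta>
  proof (cases "0 < \<theta>")
    case True
    then show ?thesis
      using assms
      by (intro mult_nonneg_nonneg gamma_dens_nonneg prod_nonneg poisson_dens_nonneg)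
        (auto intro: less_imp_le)
  qed (simp add: gamma_dens_def)
  moreover have "(\<integral>\<^sup>+\<theta>. ennreal (gamma_dens a b \<theta> * (\<Prod>j<m. poisson_dens (\<theta> * \<mu> j) (y j))) \<partial>lborel)
      = ennreal (neg_multinomial_pmf a b \<mu> m y)"
    using assms by (intro nn_integral_gamma_poisson_integrand) (auto intro: less_imp_le)
  moreover have "0 < neg_multinomial_pmf a b \<mu> m y"
    using assms by (rule neg_multinomial_pmf_pos)
  ultimately show ?thesis
    unfolding gamma_poisson_pmf_def by (subst (asm) nn_integral_eq_integrable) auto
qed

lemma ln_neg_multinomial_pmf:
  fixes m :: nat
  assumes a: "0 < a" and b: "0 < b" and \<mu>: "\<And>j. j < m \<Longrightarrow> 0 < \<mu> j"
  shows "ln (neg_multinomial_pmf a b \<mu> m y) =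
     ln (b powr a / Gamma a) + ln (Gamma (a + real (\<Sum>j<m. y j))) - (\<Sum>j<m. ln (fact (y j)))
     + (\<Sum>j<m. real (y j) * ln (\<mu> j)) - (a + real (\<Sum>j<m. y j)) * ln (b + (\<Sum>j<m. \<mu> j))"
proof -
  define N where "N = real (\<Sum>j<m. y j)"
  define M where "M = (\<Sum>j<m. \<mu> j)"
  have "0 \<le> M" and "0 \<le> N"
    using \<mu> by (auto simp: M_def N_def intro: sum_nonneg less_imp_le)
  have c: "0 < b powr a / Gamma a"
    using a b by simp
  have q: "0 < (\<Prod>j<m. \<mu> j ^ y j / fact (y j))"
    using \<mu> by (intro prod_pos) simp
  have g: "0 < Gamma (a + N)"
    using a \<open>0 \<le> N\<close> by (intro Gamma_real_pos) simp
  have d: "0 < (b + M) powr (a + N)"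
    using b \<open>0 \<le> M\<close> by simp
  have "ln (\<Prod>j<m. \<mu> j ^ y j / fact (y j)) = (\<Sum>j<m. ln (\<mu> j ^ y j / fact (y j)))"
    using \<mu> by (intro ln_prod) (simp_all add: less_imp_neq[symmetric])
  also have "\<dots> = (\<Sum>j<m. real (y j) * ln (\<mu> j)) - (\<Sum>j<m. ln (fact (y j)))"
    unfolding sum_subtractf[symmetric]
  proof (intro sum.cong refl)
    fix j assume "j \<in> {..<m}"
    then have "0 < \<mu> j" using \<mu> by simp
    then show "ln (\<mu> j ^ y j / fact (y j)) = real (y j) * ln (\<mu> j) - ln (fact (y j))"
      by (simp add: ln_divide_pos ln_realpow)
  qed
  finally show ?thesis
    unfolding neg_multinomial_pmf_def N_def[symmetric] M_def[symmetric]
    by (simp only: ln_mult_pos[OF mult_pos_pos[OF c q] divide_pos_pos[OF g d]] ln_mult_pos[OF c q]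
        ln_divide_pos[OF g d] ln_powr)
qed

lemma nn_integral_gamma_poisson_pmf_mult:
  fixes m :: nat and H :: "(nat \<Rightarrow> nat) \<Rightarrow> real"
  assumes a: "0 < a" and b: "0 < b" and \<mu>: "\<And>j. j < m \<Longrightarrow> 0 < \<mu> j" and H: "\<And>y. 0 \<le> H y"
  shows "(\<integral>\<^sup>+y. ennreal (gamma_poisson_pmf a b \<mu> m y * H y) \<partial>count_space (obs_space m))
       = (\<integral>\<^sup>+\<theta>. \<integral>\<^sup>+y. ennreal (gamma_dens a b \<theta> * (\<Prod>j<m. poisson_dens (\<theta> * \<mu> j) (y j)) * H y)
            \<partial>count_space (obs_space m) \<partial>lborel)"
proof -
  define g where "g y \<theta> = gamma_dens a b \<theta> * (\<Prod>j<m. poisson_dens (\<theta> * \<mu> j) (y j))" for y \<theta>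
  have "ennreal (gamma_poisson_pmf a b \<mu> m y) = (\<integral>\<^sup>+\<theta>. ennreal (g y \<theta>) \<partial>lborel)" for y
    using nn_integral_gamma_poisson_integrand[OF a b] \<mu>
    by (simp add: g_def gamma_poisson_pmf_eq_neg_multinomial[OF a b \<mu>] less_imp_le)
  then have "(\<integral>\<^sup>+y. ennreal (gamma_poisson_pmf a b \<mu> m y * H y) \<partial>count_space (obs_space m))
      = (\<integral>\<^sup>+y. \<integral>\<^sup>+\<theta>. ennreal (g y \<theta> * H y) \<partial>lborel \<partial>count_space (obs_space m))"
    using H by (intro nn_integral_cong) (simp add: ennreal_mult'' nn_integral_multc[symmetric] g_def)
  also have "\<dots> = (\<integral>\<^sup>+\<theta>. \<integral>\<^sup>+y. ennreal (g y \<theta> * H y) \<partial>count_space (obs_space m) \<partial>lborel)"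
    by (rule nn_integral_count_space_nn_integral[symmetric]) (auto simp: countable_obs_space g_def)
  finally show ?thesis
    by (simp only: g_def)
qed

lemma gamma_poisson_product_moment:
  fixes m :: nat and h :: "nat \<Rightarrow> nat \<Rightarrow> real" and k :: "nat \<Rightarrow> nat"
  assumes a: "0 < a" and b: "0 < b" and \<mu>: "\<And>j. j < m \<Longrightarrow> 0 < \<mu> j"
    and h_nonneg: "\<And>j n. j < m \<Longrightarrow> 0 \<le> h j n"
    and h_sums: "\<And>j l. j < m \<Longrightarrow> 0 \<le> l \<Longrightarrow> (\<lambda>n. poisson_dens l n * h j n) sums l ^ k j"
  shows "((\<lambda>y. gamma_poisson_pmf a b \<mu> m y * (\<Prod>j<m. h j (y j))) has_sum
           pochhammer a (\<Sum>j<m. k j) / b ^ (\<Sum>j<m. k j) * (\<Prod>j<m. \<mu> j ^ k j)) (obs_space m)"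
proof (rule has_sum_of_nn_integral)
  define K where "K = (\<Sum>j<m. k j)"
  have \<mu>_nonneg: "\<And>j. j < m \<Longrightarrow> 0 \<le> \<mu> j"
    using \<mu> by (simp add: less_imp_le)
  have H_nonneg: "0 \<le> (\<Prod>j<m. h j (y j))" for y
    using h_nonneg by (intro prod_nonneg) auto
  show "0 \<le> gamma_poisson_pmf a b \<mu> m y * (\<Prod>j<m. h j (y j))" for y
    using neg_multinomial_pmf_pos[OF a b \<mu>] H_nonneg
    by (simp add: gamma_poisson_pmf_eq_neg_multinomial[OF a b \<mu>] less_imp_le)
  show "0 \<le> pochhammer a (\<Sum>j<m. k j) / b ^ (\<Sum>j<m. k j) * (\<Prod>j<m. \<mu> j ^ k j)"
    using a b \<mu>_nonneg by (intro mult_nonneg_nonneg divide_nonneg_pos pochhammer_nonneg prod_nonneg) auto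
  have "(\<integral>\<^sup>+y. ennreal (gamma_poisson_pmf a b \<mu> m y * (\<Prod>j<m. h j (y j))) \<partial>count_space (obs_space m))
      = (\<integral>\<^sup>+\<theta>. \<integral>\<^sup>+y. ennreal (gamma_dens a b \<theta> * (\<Prod>j<m. poisson_dens (\<theta> * \<mu> j) (y j))
            * (\<Prod>j<m. h j (y j))) \<partial>count_space (obs_space m) \<partial>lborel)"
    using a b \<mu> H_nonneg by (rule nn_integral_gamma_poisson_pmf_mult)
  \<comment> \<open>For fixed \<open>\<theta>\<close> the counts are independent Poisson variables, so the sum over \<open>y\<close> factorises.\<close>
  also have "\<dots> = (\<integral>\<^sup>+\<theta>. ennreal (\<Prod>j<m. \<mu> j ^ k j) * ennreal (gamma_dens a b \<theta> * \<theta> ^ K) \<partial>lborel)"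
  proof (intro nn_integral_cong)
    fix \<theta> :: real
    show "(\<integral>\<^sup>+y. ennreal (gamma_dens a b \<theta> * (\<Prod>j<m. poisson_dens (\<theta> * \<mu> j) (y j))
            * (\<Prod>j<m. h j (y j))) \<partial>count_space (obs_space m))
        = ennreal (\<Prod>j<m. \<mu> j ^ k j) * ennreal (gamma_dens a b \<theta> * \<theta> ^ K)"
    proof (cases "0 < \<theta>")
      case True
      have "(\<integral>\<^sup>+y. ennreal (gamma_dens a b \<theta> * (\<Prod>j<m. poisson_dens (\<theta> * \<mu> j) (y j))
            * (\<Prod>j<m. h j (y j))) \<partial>count_space (obs_space m))
          = ennreal (gamma_dens a b \<theta>) *
            (\<integral>\<^sup>+y. ennreal (\<Prod>j<m. poisson_dens (\<theta> * \<mu> j) (y j) * h j (y j)) \<partial>count_space (obs_space m))"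
        using gamma_dens_nonneg[OF a] by (simp add: ennreal_mult' nn_integral_cmult prod.distrib mult.assoc)
      also have "\<dots> = ennreal (gamma_dens a b \<theta>) * ennreal (\<Prod>j<m. (\<theta> * \<mu> j) ^ k j)"
        using True \<mu>_nonneg h_nonneg h_sums
        by (subst nn_integral_obs_space_prod_sums) (auto intro!: mult_nonneg_nonneg poisson_dens_nonneg)
      also have "\<dots> = ennreal (\<Prod>j<m. \<mu> j ^ k j) * ennreal (gamma_dens a b \<theta> * \<theta> ^ K)"
        using True \<mu>_nonneg gamma_dens_nonneg[OF a, of b \<theta>] prod_nonneg[of "{..<m}" "\<lambda>j. \<mu> j ^ k j"]
        by (simp add: K_def power_mult_distrib prod.distrib power_sum ennreal_mult'[symmetric] mult_ac)
      finally show ?thesis .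
    qed (simp add: gamma_dens_def)
  qed
  also have "\<dots> = ennreal (\<Prod>j<m. \<mu> j ^ k j) * ennreal (pochhammer a K / b ^ K)"
    by (subst nn_integral_cmult) (simp_all add: nn_integral_gamma_dens_power[OF a b])
  also have "\<dots> = ennreal (pochhammer a K / b ^ K * (\<Prod>j<m. \<mu> j ^ k j))"
  proof -
    have "0 \<le> (\<Prod>j<m. \<mu> j ^ k j)" and "0 \<le> pochhammer a K / b ^ K"
      using a b \<mu>_nonneg by (auto intro!: prod_nonneg divide_nonneg_pos pochhammer_nonneg)
    then show ?thesis by (simp only: ennreal_mult[symmetric] mult.commute)
  qed
  finally show "(\<integral>\<^sup>+y. ennreal (gamma_poisson_pmf a b \<mu> m y * (\<Prod>j<m. h j (y j))) \<partial>count_space (obs_space m))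
      = ennreal (pochhammer a (\<Sum>j<m. k j) / b ^ (\<Sum>j<m. k j) * (\<Prod>j<m. \<mu> j ^ k j))"
    by (simp add: K_def)
qed

lemma gamma_poisson_pmf_has_sum_1:
  fixes m :: nat
  assumes "0 < a" and "0 < b" and "\<And>j. j < m \<Longrightarrow> 0 < \<mu> j"
  shows "(gamma_poisson_pmf a b \<mu> m has_sum 1) (obs_space m)"
  using gamma_poisson_product_moment[of a b m \<mu> "\<lambda>_ _. 1" "\<lambda>_. 0"] assms
  by (simp add: poisson_dens_sums)

lemma gamma_poisson_mean:
  fixes m :: nat
  assumes "0 < a" and "0 < b" and "\<And>j. j < m \<Longrightarrow> 0 < \<mu> j" and "i < m"
  shows "((\<lambda>y. gamma_poisson_pmf a b \<mu> m y * real (y i)) has_sum a / b * \<mu> i) (obs_space m)"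
  using gamma_poisson_product_moment[of a b m \<mu> "\<lambda>j n. if j = i then real n else 1"
      "\<lambda>j. if j = i then 1 else 0"] assms
  by (simp add: poisson_dens_sums poisson_dens_mean_sums if_distrib prod.If_cases cong: if_cong)

lemma gamma_poisson_factorial_moment:
  fixes m :: nat
  assumes "0 < a" and "0 < b" and "\<And>j. j < m \<Longrightarrow> 0 < \<mu> j" and "i < m"
  shows "((\<lambda>y. gamma_poisson_pmf a b \<mu> m y * (real (y i) * (real (y i) - 1))) has_sum
           a * (a + 1) / b ^ 2 * \<mu> i ^ 2) (obs_space m)"
proof -
  have "0 \<le> real n * (real n - 1)" for n
    by (cases n) auto
  then show ?thesis
    using gamma_poisson_product_moment[of a b m \<mu> "\<lambda>j n. if j = i then real n * (real n - 1) else 1"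
        "\<lambda>j. if j = i then 2 else 0"] assms
    by (simp add: poisson_dens_sums poisson_dens_factorial_moment_sums[unfolded power2_eq_square]
        if_distrib prod.If_cases numeral_2_eq_2 pochhammer_Suc cong: if_cong)
qed

lemma gamma_poisson_mixed_moment:
  fixes m :: nat
  assumes "0 < a" and "0 < b" and "\<And>j. j < m \<Longrightarrow> 0 < \<mu> j" and "i < m" and "l < m" and "i \<noteq> l"
  shows "((\<lambda>y. gamma_poisson_pmf a b \<mu> m y * (real (y i) * real (y l))) has_sum
           a * (a + 1) / b ^ 2 * (\<mu> i * \<mu> l)) (obs_space m)"
proof -
  define h where "h j n = (if j = i then real n else 1) * (if j = l then real n else 1)" for j n
  define k where "k j = (if j = i then 1 else 0) + (if j = l then 1 else (0::nat))" for j
  have "(\<Prod>j<m. h j (y j)) = real (y i) * real (y l)" for y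
    using assms by (simp add: h_def prod.distrib)
  moreover have "(\<Prod>j<m. \<mu> j ^ k j) = \<mu> i * \<mu> l"
  proof -
    have "(\<Prod>j<m. \<mu> j ^ k j) = (\<Prod>j<m. (if j = i then \<mu> j else 1) * (if j = l then \<mu> j else 1))"
      by (intro prod.cong) (auto simp: k_def)
    then show ?thesis using assms by (simp add: prod.distrib)
  qed
  moreover have "(\<Sum>j<m. k j) = 2"
    using assms by (simp add: k_def sum.distrib)
  moreover have "(\<lambda>n. poisson_dens r n * h j n) sums r ^ k j" for j r
    using assms(6) by (auto simp: h_def k_def poisson_dens_sums poisson_dens_mean_sums)
  ultimately show ?thesis
    using gamma_poisson_product_moment[of a b m \<mu> h k] assms
    by (simp add: h_def numeral_2_eq_2 pochhammer_Suc)
qed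

lemma gamma_poisson_covariance:
  fixes m :: nat
  assumes "0 < a" and "0 < b" and "\<And>j. j < m \<Longrightarrow> 0 < \<mu> j" and "i < m" and "l < m"
  shows "((\<lambda>y. gamma_poisson_pmf a b \<mu> m y * ((real (y i) - a / b * \<mu> i) * (real (y l) - a / b * \<mu> l)))
           has_sum a / b * \<mu> i * of_bool (i = l) + a / b ^ 2 * (\<mu> i * \<mu> l)) (obs_space m)"
proof -
  let ?P = "gamma_poisson_pmf a b \<mu> m"
  have second: "((\<lambda>y. ?P y * (real (y i) * real (y l))) has_sum
      a / b * \<mu> i * of_bool (i = l) + a * (a + 1) / b ^ 2 * (\<mu> i * \<mu> l)) (obs_space m)"
  proof (cases "i = l")
    case True
    have "((\<lambda>y. ?P y * (real (y i) * (real (y i) - 1)) + ?P y * real (y i)) has_sum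
        a * (a + 1) / b ^ 2 * \<mu> i ^ 2 + a / b * \<mu> i) (obs_space m)"
      using assms by (intro has_sum_add gamma_poisson_factorial_moment gamma_poisson_mean)
    then show ?thesis
      using True by (simp add: algebra_simps power2_eq_square)
  next
    case False
    then show ?thesis
      using gamma_poisson_mixed_moment[of a b m \<mu> i l] assms by simp
  qed
  have "((\<lambda>y. ?P y * (real (y i) * real (y l)) - a / b * \<mu> l * (?P y * real (y i))
          - a / b * \<mu> i * (?P y * real (y l)) + a / b * \<mu> i * (a / b * \<mu> l) * ?P y) has_sum
        a / b * \<mu> i * of_bool (i = l) + a * (a + 1) / b ^ 2 * (\<mu> i * \<mu> l)
          - a / b * \<mu> l * (a / b * \<mu> i) - a / b * \<mu> i * (a / b * \<mu> l)
          + a / b * \<mu> i * (a / b * \<mu> l) * 1) (obs_space m)"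
    using assms
    by (intro has_sum_add has_sum_diff has_sum_cmult_right second gamma_poisson_mean
        gamma_poisson_pmf_has_sum_1)
  moreover have "a / b * \<mu> i * of_bool (i = l) + a * (a + 1) / b ^ 2 * (\<mu> i * \<mu> l)
          - a / b * \<mu> l * (a / b * \<mu> i) - a / b * \<mu> i * (a / b * \<mu> l)
          + a / b * \<mu> i * (a / b * \<mu> l) * 1
      = a / b * \<mu> i * of_bool (i = l) + a / b ^ 2 * (\<mu> i * \<mu> l)"
    using assms(2) by (simp add: field_simps power2_eq_square)
  ultimately show ?thesis
    by (simp add: algebra_simps)
qed

section \<open>The score of the random-effect model\<close>

definition poisson_rate :: "nat \<Rightarrow> ('x \<Rightarrow> nat \<Rightarrow> real) \<Rightarrow> (nat \<Rightarrow> 'x) \<Rightarrow> (nat \<Rightarrow> real) \<Rightarrow> nat \<Rightarrow> real" where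
  "poisson_rate p f x \<beta> j = exp (lin_pred p f (x j) \<beta>)"

lemma poisson_rate_pos: "0 < poisson_rate p f x \<beta> j"
  by (simp add: poisson_rate_def)

lemma marg_pmf_eq_gamma_poisson_pmf:
  "marg_pmf p m f x a b \<beta> = gamma_poisson_pmf a b (poisson_rate p f x \<beta>) m"
  by (simp add: fun_eq_iff marg_pmf_def gamma_poisson_pmf_def poisson_rate_def)

lemma lin_pred_fun_upd:
  assumes "r < p"
  shows "lin_pred p f z (\<beta>(r := t)) = lin_pred p f z \<beta> + f z r * (t - \<beta> r)"
proof -
  have "lin_pred p f z (\<beta>(r := t)) = (\<Sum>i<p. f z i * \<beta> i + (if i = r then f z r * (t - \<beta> r) else 0))"
    unfolding lin_pred_def by (intro sum.cong) (auto simp: algebra_simps)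
  then show ?thesis
    using assms by (simp add: sum.distrib lin_pred_def)
qed

lemma ln_marg_pmf_has_derivative:
  fixes m p :: nat and f :: "'x \<Rightarrow> nat \<Rightarrow> real" and x :: "nat \<Rightarrow> 'x" and \<beta> :: "nat \<Rightarrow> real"
  assumes a: "0 < a" and b: "0 < b" and r: "r < p"
  defines "\<mu> \<equiv> poisson_rate p f x \<beta>"
  shows "((\<lambda>t. ln (marg_pmf p m f x a b (\<beta>(r := t)) y)) has_real_derivative
           (\<Sum>j<m. real (y j) * f (x j) r)
             - (a + real (\<Sum>j<m. y j)) * (\<Sum>j<m. \<mu> j * f (x j) r) / (b + (\<Sum>j<m. \<mu> j)))
         (at (\<beta> r))"
proof -
  define c where "c = ln (b powr a / Gamma a) + ln (Gamma (a + real (\<Sum>j<m. y j))) - (\<Sum>j<m. ln (fact (y j)))"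
  define A where "A = a + real (\<Sum>j<m. y j)"
  define \<eta> where "\<eta> j t = lin_pred p f (x j) \<beta> + f (x j) r * (t - \<beta> r)" for j t
  have eq: "(\<lambda>t. ln (marg_pmf p m f x a b (\<beta>(r := t)) y)) =
      (\<lambda>t. c + (\<Sum>j<m. real (y j) * \<eta> j t) - A * ln (b + (\<Sum>j<m. exp (\<eta> j t))))"
    using a b
    by (simp add: fun_eq_iff marg_pmf_eq_gamma_poisson_pmf gamma_poisson_pmf_eq_neg_multinomial
        poisson_rate_pos ln_neg_multinomial_pmf poisson_rate_def lin_pred_fun_upd[OF r] c_def A_def \<eta>_def)
  have dS: "((\<lambda>t. \<Sum>j<m. real (y j) * \<eta> j t) has_real_derivative (\<Sum>j<m. real (y j) * f (x j) r))
      (at (\<beta> r))"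
    unfolding \<eta>_def by (rule derivative_eq_intros refl)+ (simp add: mult.commute)
  have dL: "((\<lambda>t. ln (b + (\<Sum>j<m. exp (\<eta> j t)))) has_real_derivative
      (\<Sum>j<m. \<mu> j * f (x j) r) / (b + (\<Sum>j<m. \<mu> j))) (at (\<beta> r))"
  proof -
    have B': "((\<lambda>t. b + (\<Sum>j<m. exp (\<eta> j t))) has_real_derivative (\<Sum>j<m. \<mu> j * f (x j) r)) (at (\<beta> r))"
      unfolding \<eta>_def by (rule derivative_eq_intros refl)+ (simp add: \<mu>_def poisson_rate_def)
    have B: "b + (\<Sum>j<m. exp (\<eta> j (\<beta> r))) = b + (\<Sum>j<m. \<mu> j)"
      by (simp add: \<eta>_def \<mu>_def poisson_rate_def)
    have "0 < b + (\<Sum>j<m. \<mu> j)"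
      using b by (simp add: \<mu>_def add_pos_nonneg sum_nonneg less_imp_le poisson_rate_pos)
    then show ?thesis
      using DERIV_chain2[OF DERIV_ln_divide B'] unfolding B by simp
  qed
  have "((\<lambda>t. c + (\<Sum>j<m. real (y j) * \<eta> j t) - A * ln (b + (\<Sum>j<m. exp (\<eta> j t))))
      has_real_derivative 0 + (\<Sum>j<m. real (y j) * f (x j) r)
        - A * ((\<Sum>j<m. \<mu> j * f (x j) r) / (b + (\<Sum>j<m. \<mu> j)))) (at (\<beta> r))"
    by (intro DERIV_diff DERIV_add DERIV_const DERIV_cmult dS dL)
  then show ?thesis
    unfolding eq by (simp add: A_def)
qed

lemma score_eq_centered:
  fixes m p :: nat and f :: "'x \<Rightarrow> nat \<Rightarrow> real" and x :: "nat \<Rightarrow> 'x" and \<beta> :: "nat \<Rightarrow> real"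
  assumes a: "0 < a" and b: "0 < b" and r: "r < p"
  defines "\<mu> \<equiv> poisson_rate p f x \<beta>"
  defines "D \<equiv> b + (\<Sum>j<m. \<mu> j)" and "c \<equiv> (\<Sum>j<m. \<mu> j * f (x j) r)"
  shows "score p m f x a b \<beta> y r = (\<Sum>j<m. (f (x j) r - c / D) * (real (y j) - a / b * \<mu> j))"
proof -
  define N where "N = real (\<Sum>j<m. y j)"
  define M where "M = (\<Sum>j<m. \<mu> j)"
  have "0 < D"
    using b by (simp add: D_def \<mu>_def add_pos_nonneg sum_nonneg less_imp_le poisson_rate_pos)
  have "score p m f x a b \<beta> y r = (\<Sum>j<m. real (y j) * f (x j) r) - (a + N) * c / D"
    unfolding score_def N_def c_def D_def \<mu>_def
    by (rule DERIV_imp_deriv[OF ln_marg_pmf_has_derivative[OF a b r]])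
  \<comment> \<open>The constant \<open>a c / D\<close> is absorbed by centring since \<open>\<Sum>\<^sub>j \<mu>\<^sub>j (f (x j) r - c / D) = b c / D\<close>.\<close>
  also have "\<dots> = (\<Sum>j<m. real (y j) * f (x j) r) - a / b * c - c / D * N + c / D * (a / b) * M"
  proof -
    have M: "M = D - b"
      by (simp add: D_def M_def)
    show ?thesis
      unfolding M using b \<open>0 < D\<close> by (simp add: field_simps)
  qed
  also have "\<dots> = (\<Sum>j<m. real (y j) * f (x j) r - a / b * (\<mu> j * f (x j) r) - c / D * real (y j)
      + c / D * (a / b) * \<mu> j)"
    by (simp only: sum.distrib sum_subtractf sum_distrib_left[symmetric] c_def M_def N_def of_nat_sum)
  also have "\<dots> = (\<Sum>j<m. (f (x j) r - c / D) * (real (y j) - a / b * \<mu> j))"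
    by (intro sum.cong) (simp_all add: algebra_simps)
  finally show ?thesis .
qed

lemma centered_quadratic_form:
  fixes \<mu> F G :: "nat \<Rightarrow> real" and m :: nat and a b :: real
  defines "D \<equiv> b + (\<Sum>j<m. \<mu> j)" and "cF \<equiv> (\<Sum>j<m. \<mu> j * F j)" and "cG \<equiv> (\<Sum>j<m. \<mu> j * G j)"
  assumes "0 < b" and "D \<noteq> 0"
  shows "(\<Sum>j<m. \<Sum>l<m. (F j - cF / D) * (G l - cG / D) *
            (a / b * \<mu> j * of_bool (j = l) + a / b ^ 2 * (\<mu> j * \<mu> l)))
         = a / b * ((\<Sum>j<m. \<mu> j * F j * G j) - cF * cG / D)"
proof -
  define M where "M = (\<Sum>j<m. \<mu> j)"
  define u where "u j = F j - cF / D" for j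
  define v where "v j = G j - cG / D" for j
  have split: "u j * v l * (a / b * \<mu> j * of_bool (j = l) + a / b ^ 2 * (\<mu> j * \<mu> l))
      = (if l = j then a / b * (\<mu> j * u j * v j) else 0) + a / b ^ 2 * ((\<mu> j * u j) * (\<mu> l * v l))"
    for j l
    by (cases "j = l") (simp_all add: algebra_simps)
  have sum_u: "(\<Sum>j<m. \<mu> j * u j) = cF - M * cF / D" and sum_v: "(\<Sum>l<m. \<mu> l * v l) = cG - M * cG / D"
    unfolding u_def v_def
    by (simp_all only: right_diff_distrib sum_subtractf sum_distrib_right[symmetric]
        cF_def[symmetric] cG_def[symmetric] M_def[symmetric]) simp_all
  have sum_uv: "(\<Sum>j<m. \<mu> j * u j * v j)
      = (\<Sum>j<m. \<mu> j * F j * G j) - cF * (cG / D) - cG * (cF / D) + M * (cF * cG / D ^ 2)"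
  proof -
    have "\<mu> j * u j * v j = \<mu> j * F j * G j - (\<mu> j * F j) * (cG / D) - (\<mu> j * G j) * (cF / D)
        + \<mu> j * (cF * cG / D ^ 2)" for j
      using assms(5) by (simp add: u_def v_def field_simps power2_eq_square)
    then show ?thesis
      by (simp only: sum.distrib sum_subtractf sum_distrib_right[symmetric]
          cF_def[symmetric] cG_def[symmetric] M_def[symmetric])
  qed
  have "(\<Sum>j<m. \<Sum>l<m. (F j - cF / D) * (G l - cG / D) *
            (a / b * \<mu> j * of_bool (j = l) + a / b ^ 2 * (\<mu> j * \<mu> l)))
      = (\<Sum>j<m. a / b * (\<mu> j * u j * v j)) + (\<Sum>j<m. \<Sum>l<m. a / b ^ 2 * ((\<mu> j * u j) * (\<mu> l * v l)))"
    unfolding u_def[symmetric] v_def[symmetric] split by (simp add: sum.distrib)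
  also have "\<dots> = a / b * (\<Sum>j<m. \<mu> j * u j * v j) + a / b ^ 2 * ((\<Sum>j<m. \<mu> j * u j) * (\<Sum>l<m. \<mu> l * v l))"
    unfolding sum_product by (simp only: sum_distrib_left)
  also have "\<dots> = a / b * ((\<Sum>j<m. \<mu> j * F j * G j) - cF * (cG / D) - cG * (cF / D) + M * (cF * cG / D ^ 2))
      + a / b ^ 2 * ((cF - M * cF / D) * (cG - M * cG / D))"
    unfolding sum_u sum_v sum_uv ..
  also have "\<dots> = a / b * ((\<Sum>j<m. \<mu> j * F j * G j) - cF * cG / D)"
  proof -
    have M: "M = D - b"
      by (simp add: D_def M_def)
    show ?thesis
      unfolding M using assms(4,5) by (simp add: field_simps power2_eq_square)
  qed
  finally show ?thesis .
qed

lemma sum_e1_bilinear: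
  assumes "1 \<le> p"
  shows "(\<Sum>k<p. \<Sum>l<p. e1 k * A k l * e1 l) = A 0 0"
proof -
  have "e1 k * A k l * e1 l = (if k = 0 then if l = 0 then A 0 0 else 0 else 0)" for k l
    by (simp add: e1_def)
  then show ?thesis
    using assms by (simp add: sum.If_cases)
qed

lemma sum_e1_outer:
  assumes "1 \<le> p"
  shows "(\<Sum>k<p. \<Sum>l<p. u k * e1 k * e1 l * v l) = u 0 * v 0"
proof -
  have "u k * e1 k * e1 l * v l = (if k = 0 then if l = 0 then u 0 * v 0 else 0 else 0)" for k l
    by (simp add: e1_def)
  then show ?thesis
    using assms by (simp add: sum.If_cases)
qed

lemma has_sum_marg_pmf_score_product:
  fixes m p :: nat and f :: "'x \<Rightarrow> nat \<Rightarrow> real" and x :: "nat \<Rightarrow> 'x" and \<beta> :: "nat \<Rightarrow> real"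
  assumes a: "0 < a" and b: "0 < b" and r: "r < p" and s: "s < p"
  defines "\<mu> \<equiv> poisson_rate p f x \<beta>"
  defines "D \<equiv> b + (\<Sum>j<m. \<mu> j)"
  shows "((\<lambda>y. marg_pmf p m f x a b \<beta> y * score p m f x a b \<beta> y r * score p m f x a b \<beta> y s) has_sum
           a / b * ((\<Sum>j<m. \<mu> j * f (x j) r * f (x j) s)
             - (\<Sum>j<m. \<mu> j * f (x j) r) * (\<Sum>j<m. \<mu> j * f (x j) s) / D)) (obs_space m)"
proof -
  define c where "c t = (\<Sum>j<m. \<mu> j * f (x j) t)" for t
  define g where "g t j = f (x j) t - c t / D" for t j
  define C where "C j l = a / b * \<mu> j * of_bool (j = l) + a / b ^ 2 * (\<mu> j * \<mu> l)" for j l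
  let ?P = "marg_pmf p m f x a b \<beta>" and ?Y = "\<lambda>y j. real (y j) - a / b * \<mu> j"
  have "0 < D"
    using b by (simp add: D_def \<mu>_def add_pos_nonneg sum_nonneg less_imp_le poisson_rate_pos)
  have score: "score p m f x a b \<beta> y t = (\<Sum>j<m. g t j * ?Y y j)" if "t < p" for y t
    using score_eq_centered[OF a b that, of m f x \<beta> y] by (simp add: g_def c_def D_def \<mu>_def)
  have product: "?P y * score p m f x a b \<beta> y r * score p m f x a b \<beta> y s
      = (\<Sum>j<m. \<Sum>l<m. g r j * g s l * (?P y * (?Y y j * ?Y y l)))" for y
    by (simp add: score r s sum_product sum_distrib_left mult_ac)
  have covariance: "((\<lambda>y. ?P y * (?Y y j * ?Y y l)) has_sum C j l) (obs_space m)" if "j < m" "l < m" for j l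
    unfolding C_def \<mu>_def marg_pmf_eq_gamma_poisson_pmf
    by (intro gamma_poisson_covariance a b poisson_rate_pos that)
  have "((\<lambda>y. \<Sum>j<m. \<Sum>l<m. g r j * g s l * (?P y * (?Y y j * ?Y y l)))
      has_sum (\<Sum>j<m. \<Sum>l<m. g r j * g s l * C j l)) (obs_space m)"
    using covariance by (intro has_sum_sum has_sum_cmult_right) auto
  moreover have "(\<Sum>j<m. \<Sum>l<m. g r j * g s l * C j l)
      = a / b * ((\<Sum>j<m. \<mu> j * f (x j) r * f (x j) s) - c r * c s / D)"
    using centered_quadratic_form[where \<mu> = \<mu> and F = "\<lambda>j. f (x j) r" and G = "\<lambda>j. f (x j) s"
        and m = m and a = a and b = b] b \<open>0 < D\<close>
    by (simp add: g_def C_def c_def D_def)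
  ultimately show ?thesis
    by (simp add: product c_def)
qed

theorem theorem2:
  fixes m p :: nat and a b :: real
    and f :: "real^'k \<Rightarrow> nat \<Rightarrow> real" and x :: "nat \<Rightarrow> real^'k" and \<beta> :: "nat \<Rightarrow> real"
  assumes "0 < a" and "0 < b" and "1 \<le> p" and "\<forall>z. f z 0 = 1"
  shows "\<forall>r<p. \<forall>s<p.
     (\<forall>y\<in>obs_space m. (\<lambda>t. ln (marg_pmf p m f x a b (\<beta>(r := t)) y)) differentiable (at (\<beta> r))) \<and>
     ((\<lambda>y. marg_pmf p m f x a b \<beta> y * score p m f x a b \<beta> y r * score p m f x a b \<beta> y s)
       has_sum
      (a / b * (I_Po p m f x \<beta> r s
         - (\<Sum>k<p. \<Sum>l<p. I_Po p m f x \<beta> r k * e1 k * e1 l * I_Po p m f x \<beta> l s)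
           / ((\<Sum>k<p. \<Sum>l<p. e1 k * I_Po p m f x \<beta> k l * e1 l) + b))))
      (obs_space m)"
proof (intro allI impI conjI ballI)
  fix r s assume r: "r < p" and s: "s < p"
  show "(\<lambda>t. ln (marg_pmf p m f x a b (\<beta>(r := t)) y)) differentiable (at (\<beta> r))" for y
    using ln_marg_pmf_has_derivative[OF assms(1,2) r]
    unfolding has_field_derivative_def by (rule differentiableI)
  define \<mu> where "\<mu> = poisson_rate p f x \<beta>"
  have "I_Po p m f x \<beta> r s = (\<Sum>j<m. \<mu> j * f (x j) r * f (x j) s)"
    and "I_Po p m f x \<beta> r 0 = (\<Sum>j<m. \<mu> j * f (x j) r)"
    and "I_Po p m f x \<beta> 0 s = (\<Sum>j<m. \<mu> j * f (x j) s)"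
    and "I_Po p m f x \<beta> 0 0 = (\<Sum>j<m. \<mu> j)"
    using assms(4) by (simp_all add: I_Po_def \<mu>_def poisson_rate_def mult.commute)
  then show "((\<lambda>y. marg_pmf p m f x a b \<beta> y * score p m f x a b \<beta> y r * score p m f x a b \<beta> y s)
      has_sum (a / b * (I_Po p m f x \<beta> r s
         - (\<Sum>k<p. \<Sum>l<p. I_Po p m f x \<beta> r k * e1 k * e1 l * I_Po p m f x \<beta> l s)
           / ((\<Sum>k<p. \<Sum>l<p. e1 k * I_Po p m f x \<beta> k l * e1 l) + b)))) (obs_space m)"
    using has_sum_marg_pmf_score_product[OF assms(1,2) r s] assms(3)
    by (simp add: sum_e1_bilinear sum_e1_outer \<mu>_def add.commute)
qed

end
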